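(* For $n\ge1$ let $\mathbb{A}_n$ be $\mathbb{C}^n$ with basis $e_1,\dots,e_n$ and product $(a\cdot b)^i=a^ib^n$, i.e. $e_i\cdot e_j=\delta_j^n e_i$. Then for every $n$, $\mathbb{A}_n$ is an associative Novikov algebra; if $n\ge2$ it is non-commutative and the Lie algebra $(\mathbb{A}_n,[a,b]=a\cdot b-b\cdot a)$ is not nilpotent. Moreover: (i) every symmetric bilinear form $g$ on $\mathbb{A}_n$ satisfies $g(a\cdot b,c)=g(a,c\cdot b)$ for all $a,b,c$; (ii) a skew-symmetric bilinear form $f=(f_{ij})$ on $\mathbb{A}_n$ satisfies $f(a\cdot b,c)=f(a,c\cdot b)$ and $f(a\cdot b,c)+f(b\cdot c,a)+f(c\cdot a,b)=0$ for all $a,b,c$ if and only if $f_{ij}=0$ whenever $i\ne n$ and $j\ne n$; (iii) a symmetric bilinear form $h=(h_{ij})$ on $\mathbb{A}_n$ satisfies $h(a\cdot b,c)=h(a,c\cdot b)$ and $h(a,b\cdot c)=h(a,c\cdot b)$ for all $a,b,c$ (i.e. $h(a\cdot b,c)$ is totally symmetric) if and only if $h_{ij}=0$ whenever $i\ne n$ or $j\ne n$.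
   Context: A Novikov algebra is a complex vector space with a bilinear product $\cdot$ satisfying $(a\cdot b)\cdot c=(a\cdot c)\cdot b$ and $(a\cdot b)\cdot c-a\cdot(b\cdot c)=(b\cdot a)\cdot c-b\cdot(a\cdot c)$ for all $a,b,c$. For a bilinear form $f$, $f_{ij}=f(e_i,e_j)$. *)

theory Defs
  imports Complex_Main "HOL-Library.Function_Algebras"
begin

text \<open>The space C^n, realised as functions nat => complex supported on the
index set {1..n}; coordinate i of a vector a is a i.\<close>

definition Cn :: "nat \<Rightarrow> (nat \<Rightarrow> complex) set" where
  "Cn n = {a. \<forall>i. i \<notin> {1..n} \<longrightarrow> a i = 0}"

definition basis_vec :: "nat \<Rightarrow> nat \<Rightarrow> complex" where
  "basis_vec i = (\<lambda>k. if k = i then 1 else 0)"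

definition A_mult :: "nat \<Rightarrow> (nat \<Rightarrow> complex) \<Rightarrow> (nat \<Rightarrow> complex) \<Rightarrow> (nat \<Rightarrow> complex)" where
  "A_mult n a b = (\<lambda>i. if i \<in> {1..n} then a i * b n else 0)"

definition is_associative :: "'v set \<Rightarrow> ('v \<Rightarrow> 'v \<Rightarrow> 'v) \<Rightarrow> bool" where
  "is_associative V m \<longleftrightarrow> (\<forall>a\<in>V. \<forall>b\<in>V. \<forall>c\<in>V. m (m a b) c = m a (m b c))"

definition is_novikov :: "'v set \<Rightarrow> ('v::ab_group_add \<Rightarrow> 'v \<Rightarrow> 'v) \<Rightarrow> bool" where
  "is_novikov V m \<longleftrightarrow> (\<forall>a\<in>V. \<forall>b\<in>V. \<forall>c\<in>V.
      m (m a b) c = m (m a c) b \<and>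
      m (m a b) c - m a (m b c) = m (m b a) c - m b (m a c))"

definition is_commutative :: "'v set \<Rightarrow> ('v \<Rightarrow> 'v \<Rightarrow> 'v) \<Rightarrow> bool" where
  "is_commutative V m \<longleftrightarrow> (\<forall>a\<in>V. \<forall>b\<in>V. m a b = m b a)"

definition commutator :: "('v::ab_group_add \<Rightarrow> 'v \<Rightarrow> 'v) \<Rightarrow> 'v \<Rightarrow> 'v \<Rightarrow> 'v" where
  "commutator m a b = m a b - m b a"

inductive_set cspan :: "(nat \<Rightarrow> complex) set \<Rightarrow> (nat \<Rightarrow> complex) set" for S where
  cspan_zero: "0 \<in> cspan S"
| cspan_gen: "x \<in> S \<Longrightarrow> x \<in> cspan S"
| cspan_add: "x \<in> cspan S \<Longrightarrow> y \<in> cspan S \<Longrightarrow> x + y \<in> cspan S"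
| cspan_smult: "x \<in> cspan S \<Longrightarrow> (\<lambda>i. c * x i) \<in> cspan S"

fun lower_central :: "(nat \<Rightarrow> complex) set \<Rightarrow> ((nat \<Rightarrow> complex) \<Rightarrow> (nat \<Rightarrow> complex) \<Rightarrow> (nat \<Rightarrow> complex))
    \<Rightarrow> nat \<Rightarrow> (nat \<Rightarrow> complex) set" where
  "lower_central V m 0 = V"
| "lower_central V m (Suc k) = cspan {commutator m x y | x y. x \<in> V \<and> y \<in> lower_central V m k}"

definition lie_nilpotent :: "(nat \<Rightarrow> complex) set \<Rightarrow> ((nat \<Rightarrow> complex) \<Rightarrow> (nat \<Rightarrow> complex) \<Rightarrow> (nat \<Rightarrow> complex)) \<Rightarrow> bool" where
  "lie_nilpotent V m \<longleftrightarrow> (\<exists>k. lower_central V m k = {0})"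

definition bilinear_form_on :: "(nat \<Rightarrow> complex) set \<Rightarrow> ((nat \<Rightarrow> complex) \<Rightarrow> (nat \<Rightarrow> complex) \<Rightarrow> complex) \<Rightarrow> bool" where
  "bilinear_form_on V B \<longleftrightarrow>
     (\<forall>a\<in>V. \<forall>a'\<in>V. \<forall>b\<in>V. \<forall>c::complex.
        B (\<lambda>i. a i + a' i) b = B a b + B a' b \<and> B (\<lambda>i. c * a i) b = c * B a b \<and>
        B b (\<lambda>i. a i + a' i) = B b a + B b a' \<and> B b (\<lambda>i. c * a i) = c * B b a)"

definition symmetric_form_on :: "'v set \<Rightarrow> ('v \<Rightarrow> 'v \<Rightarrow> complex) \<Rightarrow> bool" where
  "symmetric_form_on V B \<longleftrightarrow> (\<forall>a\<in>V. \<forall>b\<in>V. B a b = B b a)"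

definition skew_form_on :: "'v set \<Rightarrow> ('v \<Rightarrow> 'v \<Rightarrow> complex) \<Rightarrow> bool" where
  "skew_form_on V B \<longleftrightarrow> (\<forall>a\<in>V. \<forall>b\<in>V. B a b = - B b a)"

end

theory Submission
  imports Defs
begin

text \<open>Everything rests on one observation: for \<open>a \<in> Cn n\<close> the product \<open>a \<cdot> b\<close> is
  the scalar multiple \<open>b\<^sup>n a\<close>. Associativity and the Novikov identities become identities
  between products of scalars, and \<open>[e\<^sub>n, e\<^sub>1] = -e\<^sub>1\<close> keeps \<open>e\<^sub>1\<close> in every term of
  the lower central series. For a bilinear form \<open>B\<close>, the conditions on \<open>B (a \<cdot> b) c\<close>
  turn into identities such as \<open>b\<^sup>n B a c + c\<^sup>n B b a + a\<^sup>n B c b = 0\<close>; evaluated on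
  basis vectors they force the stated vanishing of the Gram matrix, and conversely such a
  Gram matrix pins the form down to \<open>a\<^sup>n B(e\<^sub>n,c) - c\<^sup>n B(e\<^sub>n,a)\<close>, respectively
  \<open>a\<^sup>n c\<^sup>n B(e\<^sub>n,e\<^sub>n)\<close>, which satisfy the conditions.\<close>

lemma basis_vec_in_Cn: "i \<in> {1..n} \<Longrightarrow> basis_vec i \<in> Cn n"
  by (auto simp: Cn_def basis_vec_def)

lemma basis_vec_self [simp]: "basis_vec i i = 1"
  by (simp add: basis_vec_def)

lemma basis_vec_other [simp]: "k \<noteq> i \<Longrightarrow> basis_vec i k = 0"
  by (simp add: basis_vec_def)

lemma sum_in_Cn: "(\<And>i. i \<in> S \<Longrightarrow> x i \<in> Cn n) \<Longrightarrow> (\<lambda>k. \<Sum>i\<in>S. x i k) \<in> Cn n"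
  by (auto simp: Cn_def intro: sum.neutral)

lemma scale_in_Cn: "x \<in> Cn n \<Longrightarrow> (\<lambda>k. c * x k) \<in> Cn n"
  by (auto simp: Cn_def)

lemma Cn_basis_expansion: "a \<in> Cn n \<Longrightarrow> (\<lambda>k. \<Sum>i\<in>{1..n}. a i * basis_vec i k) = a"
  by (auto simp: Cn_def basis_vec_def fun_eq_iff if_distrib[of "(*) _"] sum.delta cong: if_cong)

lemma A_mult_in_Cn: "A_mult n a b \<in> Cn n"
  by (auto simp: A_mult_def Cn_def)

lemma A_mult_eq_scale: "a \<in> Cn n \<Longrightarrow> A_mult n a b = (\<lambda>i. b n * a i)"
  by (auto simp: A_mult_def Cn_def fun_eq_iff)

lemma A_mult_associative: "is_associative (Cn n) (A_mult n)"
  by (auto simp: is_associative_def A_mult_def fun_eq_iff)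

lemma A_mult_novikov: "is_novikov (Cn n) (A_mult n)"
  by (auto simp: is_novikov_def A_mult_def fun_eq_iff)

lemma A_mult_not_commutative:
  assumes "n \<ge> 2"
  shows "\<not> is_commutative (Cn n) (A_mult n)"
proof -
  have "A_mult n (basis_vec 1) (basis_vec n) 1 \<noteq> A_mult n (basis_vec n) (basis_vec 1) 1"
    using assms by (simp add: A_mult_def)
  moreover have "basis_vec 1 \<in> Cn n" "basis_vec n \<in> Cn n"
    using assms by (auto intro: basis_vec_in_Cn)
  ultimately show ?thesis
    unfolding is_commutative_def by metis
qed

lemma eigenvector_in_lower_central:
  assumes "x \<in> V" "y \<in> V" and eigen: "commutator m y x = (\<lambda>i. c * x i)" and "c \<noteq> 0"
  shows "x \<in> lower_central V m k"
proof (induction k)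
  case 0
  show ?case using \<open>x \<in> V\<close> by simp
next
  case (Suc k)
  have "(\<lambda>i. c * x i) \<in> cspan {commutator m x y | x y. x \<in> V \<and> y \<in> lower_central V m k}"
    unfolding eigen[symmetric] using \<open>y \<in> V\<close> Suc.IH by (blast intro: cspan_gen)
  then have "(\<lambda>i. inverse c * (c * x i)) \<in> lower_central V m (Suc k)"
    by (simp add: cspan_smult)
  then show ?case using \<open>c \<noteq> 0\<close> by (simp add: mult.assoc[symmetric])
qed

lemma not_lie_nilpotent_if_eigenvector:
  assumes "x \<in> V" "y \<in> V" "commutator m y x = (\<lambda>i. c * x i)" "c \<noteq> 0" "x \<noteq> 0"
  shows "\<not> lie_nilpotent V m"
  using eigenvector_in_lower_central[OF assms(1-4)] \<open>x \<noteq> 0\<close>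
  unfolding lie_nilpotent_def by blast

lemma A_mult_not_lie_nilpotent:
  assumes "n \<ge> 2"
  shows "\<not> lie_nilpotent (Cn n) (A_mult n)"
proof (rule not_lie_nilpotent_if_eigenvector)
  show "basis_vec 1 \<in> Cn n" "basis_vec n \<in> Cn n"
    using assms by (auto intro: basis_vec_in_Cn)
  show "commutator (A_mult n) (basis_vec n) (basis_vec 1) = (\<lambda>i. (- 1) * basis_vec 1 i)"
    using assms by (auto simp: commutator_def A_mult_def basis_vec_def fun_eq_iff)
  show "basis_vec 1 \<noteq> 0"
    by (metis basis_vec_self zero_neq_one zero_fun_def)
qed simp

lemma bilinear_form_onD:
  assumes "bilinear_form_on V B" "a \<in> V" "a' \<in> V" "b \<in> V"
  shows "B (\<lambda>i. a i + a' i) b = B a b + B a' b" "B (\<lambda>i. c * a i) b = c * B a b"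
    and "B b (\<lambda>i. a i + a' i) = B b a + B b a'" "B b (\<lambda>i. c * a i) = c * B b a"
  using assms unfolding bilinear_form_on_def by simp_all

lemma bilinear_form_on_swap: "bilinear_form_on V B \<Longrightarrow> bilinear_form_on V (\<lambda>a b. B b a)"
  unfolding bilinear_form_on_def by blast

lemma bilinear_form_on_sum_left:
  assumes B: "bilinear_form_on (Cn n) B" and "finite S"
    and x: "\<And>i. i \<in> S \<Longrightarrow> x i \<in> Cn n" and b: "b \<in> Cn n"
  shows "B (\<lambda>k. \<Sum>i\<in>S. c i * x i k) b = (\<Sum>i\<in>S. c i * B (x i) b)"
  using \<open>finite S\<close> x
proof (induction S rule: finite_induct)
  case empty
  show ?case using bilinear_form_onD(2)[OF B b b b, of 0] by simp
next
  case (insert j S)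
  have "B (\<lambda>k. \<Sum>i\<in>insert j S. c i * x i k) b
      = B (\<lambda>k. c j * x j k + (\<Sum>i\<in>S. c i * x i k)) b"
    using insert.hyps by simp
  also have "\<dots> = c j * B (x j) b + B (\<lambda>k. \<Sum>i\<in>S. c i * x i k) b"
    using insert.prems b
    by (simp add: bilinear_form_onD[OF B] scale_in_Cn sum_in_Cn)
  finally show ?case using insert by simp
qed

lemma bilinear_form_on_Cn_expand_left:
  assumes B: "bilinear_form_on (Cn n) B" and a: "a \<in> Cn n" and b: "b \<in> Cn n"
  shows "B a b = (\<Sum>i\<in>{1..n}. a i * B (basis_vec i) b)"
proof -
  have "B a b = B (\<lambda>k. \<Sum>i\<in>{1..n}. a i * basis_vec i k) b"
    by (simp only: Cn_basis_expansion[OF a])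
  also have "\<dots> = (\<Sum>i\<in>{1..n}. a i * B (basis_vec i) b)"
    by (rule bilinear_form_on_sum_left[OF B]) (simp_all add: basis_vec_in_Cn b)
  finally show ?thesis .
qed

lemma bilinear_form_on_Cn_expansion:
  assumes B: "bilinear_form_on (Cn n) B" and a: "a \<in> Cn n" and b: "b \<in> Cn n"
  shows "B a b = (\<Sum>i\<in>{1..n}. \<Sum>j\<in>{1..n}. a i * b j * B (basis_vec i) (basis_vec j))"
proof -
  have "B a b = (\<Sum>i\<in>{1..n}. a i * B (basis_vec i) b)"
    using bilinear_form_on_Cn_expand_left[OF B a b] .
  also have "\<dots> = (\<Sum>i\<in>{1..n}. a i * (\<Sum>j\<in>{1..n}. b j * B (basis_vec i) (basis_vec j)))"
    using bilinear_form_on_Cn_expand_left[OF bilinear_form_on_swap[OF B] b basis_vec_in_Cn]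
    by simp
  finally show ?thesis
    by (simp add: sum_distrib_left mult.assoc mult.left_commute)
qed

lemma bilinear_form_on_Cn_eqI:
  assumes "bilinear_form_on (Cn n) B" "bilinear_form_on (Cn n) B'"
    and "\<And>i j. i \<in> {1..n} \<Longrightarrow> j \<in> {1..n} \<Longrightarrow> B (basis_vec i) (basis_vec j) = B' (basis_vec i) (basis_vec j)"
    and "a \<in> Cn n" "b \<in> Cn n"
  shows "B a b = B' a b"
  using assms by (simp add: bilinear_form_on_Cn_expansion)

lemma A_mult_form_left:
  "bilinear_form_on (Cn n) B \<Longrightarrow> a \<in> Cn n \<Longrightarrow> c \<in> Cn n \<Longrightarrow> B (A_mult n a b) c = b n * B a c"
  by (simp add: A_mult_eq_scale bilinear_form_onD)

lemma A_mult_form_right: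
  "bilinear_form_on (Cn n) B \<Longrightarrow> a \<in> Cn n \<Longrightarrow> c \<in> Cn n \<Longrightarrow> B a (A_mult n c b) = b n * B a c"
  by (simp add: A_mult_eq_scale bilinear_form_onD)

lemma A_mult_form_invariant:
  "bilinear_form_on (Cn n) B \<Longrightarrow> a \<in> Cn n \<Longrightarrow> c \<in> Cn n \<Longrightarrow> B (A_mult n a b) c = B a (A_mult n c b)"
  by (simp add: A_mult_form_left A_mult_form_right)

lemma A_mult_form_cyclic:
  assumes "bilinear_form_on (Cn n) B" "a \<in> Cn n" "b \<in> Cn n" "c \<in> Cn n"
  shows "B (A_mult n a b) c + B (A_mult n b c) a + B (A_mult n c a) b
       = b n * B a c + c n * B b a + a n * B c b"
  using assms by (simp add: A_mult_form_left)

lemma A_mult_skew_form_iff: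
  assumes "n \<ge> 1" and B: "bilinear_form_on (Cn n) f" and skew: "skew_form_on (Cn n) f"
  shows "(\<forall>a\<in>Cn n. \<forall>b\<in>Cn n. \<forall>c\<in>Cn n.
            f (A_mult n a b) c = f a (A_mult n c b) \<and>
            f (A_mult n a b) c + f (A_mult n b c) a + f (A_mult n c a) b = 0)
    \<longleftrightarrow> (\<forall>i\<in>{1..n}. \<forall>j\<in>{1..n}. i \<noteq> n \<and> j \<noteq> n \<longrightarrow> f (basis_vec i) (basis_vec j) = 0)"
    (is "?cyclic \<longleftrightarrow> ?gram")
proof
  assume ?cyclic
  show ?gram
  proof (intro ballI impI)
    fix i j assume i: "i \<in> {1..n}" and j: "j \<in> {1..n}" and "i \<noteq> n \<and> j \<noteq> n"
    have e: "basis_vec i \<in> Cn n" "basis_vec j \<in> Cn n" "basis_vec n \<in> Cn n"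
      using i j \<open>n \<ge> 1\<close> by (auto intro: basis_vec_in_Cn)
    have "f (A_mult n (basis_vec j) (basis_vec i)) (basis_vec n)
        + f (A_mult n (basis_vec i) (basis_vec n)) (basis_vec j)
        + f (A_mult n (basis_vec n) (basis_vec j)) (basis_vec i) = 0"
      using \<open>?cyclic\<close> e by blast
    then show "f (basis_vec i) (basis_vec j) = 0"
      using A_mult_form_cyclic[OF B e(2,1,3)] \<open>i \<noteq> n \<and> j \<noteq> n\<close> by simp
  qed
next
  assume ?gram
  let ?\<phi> = "f (basis_vec n)"
  have en: "basis_vec n \<in> Cn n" using \<open>n \<ge> 1\<close> by (auto intro: basis_vec_in_Cn)
  have model: "f a c = a n * ?\<phi> c - c n * ?\<phi> a" if "a \<in> Cn n" "c \<in> Cn n" for a c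
  proof (rule bilinear_form_on_Cn_eqI[OF B _ _ that])
    have \<phi>_add: "?\<phi> (\<lambda>i. x i + y i) = ?\<phi> x + ?\<phi> y" if "x \<in> Cn n" "y \<in> Cn n" for x y
      using bilinear_form_onD(3)[OF B that en] .
    have \<phi>_scale: "?\<phi> (\<lambda>i. s * x i) = s * ?\<phi> x" if "x \<in> Cn n" for x s
      using bilinear_form_onD(4)[OF B that that en] .
    show "bilinear_form_on (Cn n) (\<lambda>a c. a n * ?\<phi> c - c n * ?\<phi> a)"
      unfolding bilinear_form_on_def by (simp add: \<phi>_add \<phi>_scale algebra_simps)
    have "?\<phi> (basis_vec n) = - ?\<phi> (basis_vec n)"
      using skew en unfolding skew_form_on_def by blast
    then have "?\<phi> (basis_vec n) = 0"
      by simp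
    moreover have "f (basis_vec i) (basis_vec n) = - ?\<phi> (basis_vec i)"
      if "i \<in> {1..n}" "i \<noteq> n" for i
      using skew en basis_vec_in_Cn[OF that(1)] unfolding skew_form_on_def by blast
    ultimately show "f (basis_vec i) (basis_vec j)
        = basis_vec i n * ?\<phi> (basis_vec j) - basis_vec j n * ?\<phi> (basis_vec i)"
      if "i \<in> {1..n}" "j \<in> {1..n}" for i j
      using \<open>?gram\<close> that by (cases "i = n"; cases "j = n") simp_all
  qed
  show ?cyclic
  proof (intro ballI conjI)
    fix a b c assume abc: "a \<in> Cn n" "b \<in> Cn n" "c \<in> Cn n"
    then show "f (A_mult n a b) c = f a (A_mult n c b)"
      by (simp add: A_mult_form_invariant[OF B])
    have "f (A_mult n a b) c + f (A_mult n b c) a + f (A_mult n c a) b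
        = b n * f a c + c n * f b a + a n * f c b"
      using A_mult_form_cyclic[OF B abc] .
    also have "\<dots> = 0"
      unfolding model[OF abc(1,3)] model[OF abc(2,1)] model[OF abc(3,2)]
      by (simp add: algebra_simps)
    finally show "f (A_mult n a b) c + f (A_mult n b c) a + f (A_mult n c a) b = 0" .
  qed
qed

lemma A_mult_symmetric_form_iff:
  assumes "n \<ge> 1" and B: "bilinear_form_on (Cn n) h" and sym: "symmetric_form_on (Cn n) h"
  shows "(\<forall>a\<in>Cn n. \<forall>b\<in>Cn n. \<forall>c\<in>Cn n.
            h (A_mult n a b) c = h a (A_mult n c b) \<and>
            h a (A_mult n b c) = h a (A_mult n c b))
    \<longleftrightarrow> (\<forall>i\<in>{1..n}. \<forall>j\<in>{1..n}. i \<noteq> n \<or> j \<noteq> n \<longrightarrow> h (basis_vec i) (basis_vec j) = 0)"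
    (is "?symmetric \<longleftrightarrow> ?gram")
proof
  assume ?symmetric
  have right: "h (basis_vec i) (basis_vec j) = 0" if "i \<in> {1..n}" "j \<in> {1..n}" "j \<noteq> n" for i j
  proof -
    have e: "basis_vec i \<in> Cn n" "basis_vec j \<in> Cn n" "basis_vec n \<in> Cn n"
      using that \<open>n \<ge> 1\<close> by (auto intro: basis_vec_in_Cn)
    have "h (basis_vec i) (A_mult n (basis_vec j) (basis_vec n))
        = h (basis_vec i) (A_mult n (basis_vec n) (basis_vec j))"
      using \<open>?symmetric\<close> e by blast
    then have "basis_vec n n * h (basis_vec i) (basis_vec j) = basis_vec j n * h (basis_vec i) (basis_vec n)"
      by (simp add: A_mult_form_right[OF B] e)
    then show ?thesis
      using \<open>j \<noteq> n\<close> by simp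
  qed
  show ?gram
  proof (intro ballI impI)
    fix i j assume ij: "i \<in> {1..n}" "j \<in> {1..n}" "i \<noteq> n \<or> j \<noteq> n"
    then have "h (basis_vec i) (basis_vec j) = h (basis_vec j) (basis_vec i)"
      using sym basis_vec_in_Cn unfolding symmetric_form_on_def by blast
    then show "h (basis_vec i) (basis_vec j) = 0"
      using ij right by metis
  qed
next
  assume ?gram
  let ?k = "h (basis_vec n) (basis_vec n)"
  have model: "h a c = a n * c n * ?k" if "a \<in> Cn n" "c \<in> Cn n" for a c
  proof (rule bilinear_form_on_Cn_eqI[OF B _ _ that])
    show "bilinear_form_on (Cn n) (\<lambda>a c. a n * c n * ?k)"
      by (simp add: bilinear_form_on_def algebra_simps)
    show "h (basis_vec i) (basis_vec j) = basis_vec i n * basis_vec j n * ?k"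
      if "i \<in> {1..n}" "j \<in> {1..n}" for i j
      using \<open>?gram\<close> that by (cases "i = n"; cases "j = n") simp_all
  qed
  show ?symmetric
  proof (intro ballI conjI)
    fix a b c assume abc: "a \<in> Cn n" "b \<in> Cn n" "c \<in> Cn n"
    then show "h (A_mult n a b) c = h a (A_mult n c b)"
      by (simp add: A_mult_form_invariant[OF B])
    have "h a (A_mult n b c) = c n * h a b"
      using A_mult_form_right[OF B abc(1,2)] .
    also have "\<dots> = b n * h a c"
      by (simp add: model abc)
    also have "\<dots> = h a (A_mult n c b)"
      using A_mult_form_right[OF B abc(1,3)] by simp
    finally show "h a (A_mult n b c) = h a (A_mult n c b)" .
  qed
qed

theorem proposition6p1:
  fixes n :: nat
  assumes "n \<ge> 1"
  shows "is_associative (Cn n) (A_mult n)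
    \<and> is_novikov (Cn n) (A_mult n)
    \<and> (n \<ge> 2 \<longrightarrow> \<not> is_commutative (Cn n) (A_mult n)
                \<and> \<not> lie_nilpotent (Cn n) (A_mult n))
    \<and> (\<forall>g. bilinear_form_on (Cn n) g \<and> symmetric_form_on (Cn n) g \<longrightarrow>
          (\<forall>a\<in>Cn n. \<forall>b\<in>Cn n. \<forall>c\<in>Cn n. g (A_mult n a b) c = g a (A_mult n c b)))
    \<and> (\<forall>f. bilinear_form_on (Cn n) f \<and> skew_form_on (Cn n) f \<longrightarrow>
          ((\<forall>a\<in>Cn n. \<forall>b\<in>Cn n. \<forall>c\<in>Cn n.
              f (A_mult n a b) c = f a (A_mult n c b) \<and>
              f (A_mult n a b) c + f (A_mult n b c) a + f (A_mult n c a) b = 0)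
           \<longleftrightarrow> (\<forall>i\<in>{1..n}. \<forall>j\<in>{1..n}. i \<noteq> n \<and> j \<noteq> n \<longrightarrow> f (basis_vec i) (basis_vec j) = 0)))
    \<and> (\<forall>h. bilinear_form_on (Cn n) h \<and> symmetric_form_on (Cn n) h \<longrightarrow>
          ((\<forall>a\<in>Cn n. \<forall>b\<in>Cn n. \<forall>c\<in>Cn n.
              h (A_mult n a b) c = h a (A_mult n c b) \<and>
              h a (A_mult n b c) = h a (A_mult n c b))
           \<longleftrightarrow> (\<forall>i\<in>{1..n}. \<forall>j\<in>{1..n}. i \<noteq> n \<or> j \<noteq> n \<longrightarrow> h (basis_vec i) (basis_vec j) = 0)))"
proof (intro conjI allI impI)
  show "\<not> is_commutative (Cn n) (A_mult n)" "\<not> lie_nilpotent (Cn n) (A_mult n)" if "n \<ge> 2"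
    using that A_mult_not_commutative A_mult_not_lie_nilpotent by blast+
qed (blast intro: A_mult_associative A_mult_novikov A_mult_form_invariant
    | (rule A_mult_skew_form_iff[OF assms] A_mult_symmetric_form_iff[OF assms]; blast))+

end
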